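(* Let $d\ge 2$ and let $g:[-1,1]\to(-\infty,\infty]$ be a function that is finite and continuous on $[-1,1)$ with $g(1)=\lim_{t\to1^-}g(t)$, differentiable on $(-1,1)$, and such that $g''$ exists and is non-negative and convex on $(-1,1)$. Let $\omega_{2d}$ be any antipodal configuration of $2d$ points on $S^{d-1}$, and let $\overline\omega_{2d}=\{\pm\mathbf a_1,\ldots,\pm\mathbf a_d\}$, where $\{\mathbf a_1,\dots,\mathbf a_d\}$ is an orthonormal basis of $\mathbb R^d$. Then $$P^g(\omega_{2d},S^{d-1})\leq P^g(\overline\omega_{2d},S^{d-1})=d\left(g\left(\tfrac1{\sqrt d}\right)+g\left(-\tfrac1{\sqrt d}\right)\right).$$
   Context: $S^{d-1}$ is the unit sphere in $\mathbb R^d$. A configuration is a list of points (points may coincide); it is antipodal if together with $\mathbf x$ it contains $-\mathbf x$. For a configuration $\omega_N=\{\mathbf x_1,\ldots,\mathbf x_N\}\subset S^{d-1}$, $P^g(\omega_N,S^{d-1}):=\min_{\mathbf x\in S^{d-1}}\sum_{i=1}^N g(\mathbf x\cdot\mathbf x_i)$. *)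

theory Defs
  imports "HOL-Analysis.Analysis" "HOL-Library.Multiset"
begin

text \<open>A configuration on the sphere is a finite multiset of points (points may coincide).
  It is antipodal if it is invariant (with multiplicities) under x \<mapsto> -x.\<close>

definition antipodal :: "('a::real_normed_vector) multiset \<Rightarrow> bool" where
  "antipodal \<omega> \<longleftrightarrow> image_mset uminus \<omega> = \<omega>"

text \<open>Polarization P^g(omega, S^{d-1}); potentials take values in (-inf, +inf], modelled by ereal.\<close>

definition polarization ::
  "(real \<Rightarrow> ereal) \<Rightarrow> (real^'n) multiset \<Rightarrow> ereal" where
  "polarization g \<omega> = (INF x\<in>sphere (0::real^'n) 1. (\<Sum>y\<in>#\<omega>. g (x \<bullet> y)))"

end

theory Submission
  imports Defs
begin

text \<open>Write \<open>H t = g t + g (-t)\<close> and \<open>c = 1 / sqrt d\<close>. Convexity of \<open>g''\<close> makes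
  \<open>g'' t + g'' (-t)\<close> increasing on \<open>[0, 1)\<close>; hence, as \<open>g'' \<ge> 0\<close>, \<open>H\<close> is increasing there,
  and \<open>H' t / t\<close> is increasing as well, which means that \<open>H\<close> lies above the even quadratic
  \<open>A + B t\<^sup>2\<close> touching it at \<open>\<plusminus>c\<close>.

  An antipodal configuration of \<open>2d\<close> unit vectors is \<open>\<plusminus>\<close> a set of at most \<open>d\<close> vectors,
  and for at most \<open>d\<close> unit vectors there is a unit \<open>x\<close> with all \<open>\<bar>x \<bullet> v\<bar> \<le> c\<close>: either a
  vector orthogonal to all of them, or, if they form a basis, the normalised sum of the dual
  basis with suitably chosen signs. At this \<open>x\<close> the potential is at most \<open>d H c\<close>.

  For the cross-polytope the potential at a unit \<open>x\<close> is \<open>\<Sum>i. H (x \<bullet> a i)\<close>, which is at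
  least \<open>d A + B \<Sum>i. (x \<bullet> a i)\<^sup>2 = d A + B = d H c\<close>, with equality at
  \<open>x = c (a 1 + \<dots> + a d)\<close>.\<close>

section \<open>Unit vectors almost orthogonal to a few given vectors\<close>

lemma exists_signs_norm_sum_ge:
  fixes y :: "'b \<Rightarrow> 'a::real_inner"
  assumes "finite V"
  obtains e where "\<forall>v\<in>V. \<bar>e v\<bar> = 1"
    and "(\<Sum>v\<in>V. (norm (y v))\<^sup>2) \<le> (norm (\<Sum>v\<in>V. e v *\<^sub>R y v))\<^sup>2"
  using assms
proof (induction V arbitrary: thesis rule: finite_induct)
  case empty
  then show ?case by auto
next
  case (insert u V)
  obtain e where e: "\<forall>v\<in>V. \<bar>e v\<bar> = 1"
    and le: "(\<Sum>v\<in>V. (norm (y v))\<^sup>2) \<le> (norm (\<Sum>v\<in>V. e v *\<^sub>R y v))\<^sup>2"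
    using insert.IH by blast
  define s where "s = (\<Sum>v\<in>V. e v *\<^sub>R y v)"
  \<comment> \<open>choose the new sign so that the cross term is nonnegative\<close>
  define \<sigma> :: real where "\<sigma> = (if s \<bullet> y u \<ge> 0 then 1 else -1)"
  show ?case
  proof (rule insert.prems)
    show "\<forall>v\<in>insert u V. \<bar>(e(u := \<sigma>)) v\<bar> = 1"
      using e by (simp add: \<sigma>_def)
    have "(\<Sum>v\<in>insert u V. (norm (y v))\<^sup>2) = (norm (y u))\<^sup>2 + (\<Sum>v\<in>V. (norm (y v))\<^sup>2)"
      using insert.hyps by simp
    also have "\<dots> \<le> (norm (y u))\<^sup>2 + (norm s)\<^sup>2"
      using le by (simp add: s_def)
    also have "\<dots> \<le> (norm (\<sigma> *\<^sub>R y u + s))\<^sup>2"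
      unfolding power2_norm_eq_inner by (simp add: inner_add_left inner_add_right inner_commute \<sigma>_def)
    also have "\<sigma> *\<^sub>R y u + s = (\<Sum>v\<in>insert u V. (e(u := \<sigma>)) v *\<^sub>R y v)"
      using insert.hyps by (auto simp: s_def intro!: sum.cong)
    finally show "(\<Sum>v\<in>insert u V. (norm (y v))\<^sup>2)
      \<le> (norm (\<Sum>v\<in>insert u V. (e(u := \<sigma>)) v *\<^sub>R y v))\<^sup>2" .
  qed
qed

lemma exists_unit_vector_small_inner:
  fixes V :: "'a::euclidean_space set"
  assumes fin: "finite V" and unit: "\<forall>v\<in>V. norm v \<le> 1" and card: "card V \<le> DIM('a)"
  obtains x where "norm x = 1" "\<forall>v\<in>V. \<bar>x \<bullet> v\<bar> \<le> 1 / sqrt DIM('a)"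
proof (cases "\<exists>z. z \<noteq> 0 \<and> (\<forall>v\<in>V. z \<bullet> v = 0)")
  case True
  then obtain z where "z \<noteq> 0" "\<forall>v\<in>V. z \<bullet> v = 0" by blast
  then show ?thesis
    using that[of "z /\<^sub>R norm z"] by auto
next
  case False
  have exists_orthogonal: "\<exists>z. z \<noteq> 0 \<and> (\<forall>w\<in>W. z \<bullet> w = 0)"
    if W: "W \<subseteq> V" "card W < DIM('a)" for W
  proof -
    have "finite W"
      using W fin finite_subset by blast
    then have "dim W \<le> card W"
      by (rule dim_le_card[OF span_superset])
    then obtain z where "z \<noteq> 0" "\<And>y. y \<in> span W \<Longrightarrow> orthogonal z y"
      using W(2) orthogonal_to_subspace_exists[of W] by auto
    then show ?thesis using span_base unfolding orthogonal_def by blast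
  qed
  have card_V: "card V = DIM('a)"
    using exists_orthogonal[of V] False card by force
  \<comment> \<open>V is a basis; take its dual basis\<close>
  have "\<exists>u. \<forall>w\<in>V. u \<bullet> w = (if w = v then 1 else 0)" if v: "v \<in> V" for v
  proof -
    have "card (V - {v}) < DIM('a)"
      using v card_V fin by (metis card_Diff1_less)
    then obtain z where z: "z \<noteq> 0" "\<forall>w\<in>V - {v}. z \<bullet> w = 0"
      using exists_orthogonal[of "V - {v}"] by blast
    then have "z \<bullet> v \<noteq> 0"
      using False by (metis Diff_iff singletonD)
    then show ?thesis
      using z by (intro exI[of _ "z /\<^sub>R (z \<bullet> v)"]) auto
  qed
  then obtain y
    where dual: "\<And>v w. v \<in> V \<Longrightarrow> w \<in> V \<Longrightarrow> y v \<bullet> w = (if w = v then 1 else 0)"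
    by metis
  have norm_y: "1 \<le> norm (y v)" if "v \<in> V" for v
  proof -
    have "1 = y v \<bullet> v" using dual that by simp
    also have "\<dots> \<le> norm (y v) * norm v" by (rule norm_cauchy_schwarz)
    also have "\<dots> \<le> norm (y v)" using unit that by (simp add: mult_left_le)
    finally show ?thesis .
  qed
  obtain e where e: "\<forall>v\<in>V. \<bar>e v\<bar> = 1"
    and le: "(\<Sum>v\<in>V. (norm (y v))\<^sup>2) \<le> (norm (\<Sum>v\<in>V. e v *\<^sub>R y v))\<^sup>2"
    using exists_signs_norm_sum_ge[OF fin] by blast
  define s where "s = (\<Sum>v\<in>V. e v *\<^sub>R y v)"
  have "real DIM('a) \<le> (\<Sum>v\<in>V. (norm (y v))\<^sup>2)"
    using card_V norm_y sum_mono[of V "\<lambda>_. 1" "\<lambda>v. (norm (y v))\<^sup>2"] by (simp add: one_le_power)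
  then have s_large: "sqrt DIM('a) \<le> norm s"
    using le by (simp add: s_def real_le_lsqrt)
  have s_inner: "s \<bullet> v = e v" if "v \<in> V" for v
  proof -
    have "s \<bullet> v = (\<Sum>w\<in>V. if v = w then e w else 0)"
      using that by (auto simp: s_def inner_sum_left dual intro: sum.cong)
    then show ?thesis
      using that fin by simp
  qed
  have "0 < norm s"
    using s_large by (rule less_le_trans[rotated]) simp
  moreover have "\<bar>(s /\<^sub>R norm s) \<bullet> v\<bar> \<le> 1 / sqrt DIM('a)" if "v \<in> V" for v
  proof -
    have "\<bar>(s /\<^sub>R norm s) \<bullet> v\<bar> = 1 / norm s"
      using that s_inner e by (simp add: abs_mult divide_inverse)
    also have "\<dots> \<le> 1 / sqrt DIM('a)"
      using s_large \<open>0 < norm s\<close> by (intro divide_left_mono) auto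
    finally show ?thesis .
  qed
  ultimately show ?thesis
    using that[of "s /\<^sub>R norm s"] by auto
qed

lemma symmetric_set_half:
  fixes S :: "'a::real_vector set"
  assumes "finite S" and "\<And>v. v \<in> S \<Longrightarrow> -v \<in> S" and "0 \<notin> S"
  obtains V where "V \<subseteq> S" "2 * card V \<le> card S" "S \<subseteq> V \<union> uminus ` V"
  using assms
proof (induction "card S" arbitrary: S thesis rule: less_induct)
  case less
  show ?case
  proof (cases "S = {}")
    case True
    then show ?thesis using less.prems(1)[of "{}"] by simp
  next
    case False
    then obtain v where v: "v \<in> S" by blast
    have "v \<noteq> -v"
      using v less.prems(4) by (metis eq_neg_iff_add_eq_0 scaleR_2 scaleR_eq_0_iff zero_neq_numeral)
    then have pair: "{v, -v} \<subseteq> S" "card {v, -v} = 2"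
      using v less.prems(3) by auto
    define S' where "S' = S - {v, -v}"
    have card_S': "card S' + 2 = card S"
      using pair card_mono[OF less.prems(2) pair(1)] less.prems(2)
      by (simp add: S'_def card_Diff_subset)
    have "finite S'" "\<And>w. w \<in> S' \<Longrightarrow> -w \<in> S'" "0 \<notin> S'"
      using less.prems(2-4) by (auto simp: S'_def)
    moreover have "card S' < card S"
      using card_S' by linarith
    ultimately obtain V' where
      V': "V' \<subseteq> S'" "2 * card V' \<le> card S'" "S' \<subseteq> V' \<union> uminus ` V'"
      using less.hyps[of S'] by blast
    have "finite V'"
      using V'(1) less.prems(2) by (auto simp: S'_def intro: finite_subset)
    then have "card (insert v V') \<le> card V' + 1"
      by (simp add: card_insert_if)
    then show ?thesis
      using less.prems(1)[of "insert v V'"] V' v card_S' by (auto simp: S'_def)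
  qed
qed

lemma antipodal_exists_unit_vector_small_inner:
  fixes \<omega> :: "'a::euclidean_space multiset"
  assumes unit: "\<forall>y\<in>#\<omega>. norm y = 1" and size: "size \<omega> \<le> 2 * DIM('a)" and "antipodal \<omega>"
  obtains x where "norm x = 1" "\<forall>y\<in>#\<omega>. \<bar>x \<bullet> y\<bar> \<le> 1 / sqrt DIM('a)"
proof -
  have "-v \<in># \<omega>" if "v \<in># \<omega>" for v
    using that \<open>antipodal \<omega>\<close> by (metis antipodal_def image_eqI set_image_mset)
  moreover have "0 \<notin># \<omega>"
    using unit by auto
  ultimately obtain V where V: "V \<subseteq> set_mset \<omega>" "2 * card V \<le> card (set_mset \<omega>)"
    "set_mset \<omega> \<subseteq> V \<union> uminus ` V"
    using symmetric_set_half[of "set_mset \<omega>"] by auto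
  have "card (set_mset \<omega>) \<le> size \<omega>"
    by (induction \<omega>) (auto simp: card_insert_if)
  then have "card V \<le> DIM('a)"
    using V(2) size by linarith
  moreover have "finite V"
    using V(1) by (rule finite_subset) simp
  moreover have "\<forall>v\<in>V. norm v \<le> 1"
    using V(1) unit by auto
  ultimately obtain x where x: "norm x = 1" "\<forall>v\<in>V. \<bar>x \<bullet> v\<bar> \<le> 1 / sqrt DIM('a)"
    using exists_unit_vector_small_inner by blast
  show ?thesis
  proof (rule that[OF x(1)], intro ballI)
    fix y assume "y \<in># \<omega>"
    then consider "y \<in> V" | "-y \<in> V"
      using V(3) by force
    then show "\<bar>x \<bullet> y\<bar> \<le> 1 / sqrt DIM('a)"
      using x(2) by cases (auto simp: inner_minus_right dest: bspec)
  qed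
qed

section \<open>The even part of a potential with convex second derivative\<close>

lemma convex_on_symmetric_sum_mono:
  fixes f :: "real \<Rightarrow> real"
  assumes f: "convex_on {-r<..<r} f" and "0 \<le> s" "s \<le> t" "t < r"
  shows "f s + f (-s) \<le> f t + f (-t)"
proof (cases "t = 0")
  case True
  then show ?thesis using assms by simp
next
  case False
  then have "0 < t" using assms by simp
  define m where "m = (s + t) / (2 * t)"
  have m: "0 \<le> m" "m \<le> 1"
    using assms \<open>0 < t\<close> by (auto simp: m_def field_simps)
  have t: "t \<in> {-r<..<r}" "-t \<in> {-r<..<r}"
    using assms by auto
  have "s = (1 - m) *\<^sub>R (-t) + m *\<^sub>R t" "-s = (1 - m) *\<^sub>R t + m *\<^sub>R (-t)"
    using \<open>0 < t\<close> by (simp_all add: m_def field_simps)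
  then have "f s \<le> (1 - m) * f (-t) + m * f t" "f (-s) \<le> (1 - m) * f t + m * f (-t)"
    using convex_onD[OF f m t(2) t(1)] convex_onD[OF f m t(1) t(2)] by simp_all
  then show ?thesis
    by (simp add: algebra_simps)
qed

lemma slope_from_origin_mono:
  fixes F F' :: "real \<Rightarrow> real"
  assumes F0: "F 0 = 0"
    and DF: "\<And>x. 0 \<le> x \<Longrightarrow> x < b \<Longrightarrow> (F has_real_derivative F' x) (at x)"
    and F'_mono: "\<And>x y. 0 \<le> x \<Longrightarrow> x \<le> y \<Longrightarrow> y < b \<Longrightarrow> F' x \<le> F' y"
    and "0 < s" "s \<le> t" "t < b"
  shows "F s / s \<le> F t / t"
proof (rule DERIV_nonneg_imp_nondecreasing[OF \<open>s \<le> t\<close>])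
  fix x assume x: "s \<le> x" "x \<le> t"
  then have "0 < x" "x < b"
    using assms by auto
  obtain z where z: "0 < z" "z < x" "F x - F 0 = (x - 0) * F' z"
    using MVT2[of 0 x F F'] DF \<open>0 < x\<close> \<open>x < b\<close> by auto
  then have "F x \<le> x * F' x"
    using F0 F'_mono[of z x] \<open>0 < x\<close> \<open>x < b\<close> by (simp add: mult_left_mono)
  moreover have "((\<lambda>x. F x / x) has_real_derivative (F' x * x - 1 * F x) / x ^ Suc (Suc 0)) (at x)"
    using DF \<open>0 < x\<close> \<open>x < b\<close> by (intro DERIV_quotient DERIV_ident) auto
  ultimately show "\<exists>y. ((\<lambda>x. F x / x) has_real_derivative y) (at x) \<and> 0 \<le> y"
    by (auto simp: algebra_simps)
qed

lemma quadratic_minorant_of_slope_mono: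
  fixes H h :: "real \<Rightarrow> real"
  assumes DH: "\<And>x. 0 \<le> x \<Longrightarrow> x < b \<Longrightarrow> (H has_real_derivative h x) (at x)"
    and h0: "h 0 = 0"
    and slope_mono: "\<And>s t. 0 < s \<Longrightarrow> s \<le> t \<Longrightarrow> t < b \<Longrightarrow> h s / s \<le> h t / t"
    and c: "0 < c" "c < b" and t: "0 \<le> t" "t < b"
  shows "H c - h c / (2 * c) * c\<^sup>2 \<le> H t - h c / (2 * c) * t\<^sup>2"
proof -
  define \<phi> where "\<phi> x = H x - h c / (2 * c) * x\<^sup>2" for x
  have D\<phi>: "(\<phi> has_real_derivative h x - x * (h c / c)) (at x)" if "0 \<le> x" "x < b" for x
    unfolding \<phi>_def using DH[OF that] c by (auto intro!: derivative_eq_intros simp: field_simps)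
  \<comment> \<open>\<open>\<phi>' x = x (h x / x - h c / c)\<close> changes sign at \<open>c\<close>\<close>
  have sign: "(h x - x * (h c / c)) * (x - c) \<ge> 0" if "0 \<le> x" "x < b" for x
  proof (cases "x = 0")
    case False
    then have "h x - x * (h c / c) = x * (h x / x - h c / c)"
      by (simp add: field_simps)
    moreover have "(h x / x - h c / c) * (x - c) \<ge> 0"
      using slope_mono[of c x] slope_mono[of x c] that False c
      by (cases "c \<le> x") (auto simp: mult_nonneg_nonneg mult_nonpos_nonpos)
    ultimately show ?thesis
      using that by (simp add: mult.assoc)
  qed (simp add: h0)
  show ?thesis
  proof (cases "c \<le> t")
    case True
    show ?thesis
      unfolding \<phi>_def[symmetric]
    proof (rule DERIV_nonneg_imp_nondecreasing[OF True])
      fix x assume "c \<le> x" "x \<le> t"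
      then show "\<exists>y. (\<phi> has_real_derivative y) (at x) \<and> 0 \<le> y"
        using D\<phi>[of x] sign[of x] c t by (intro exI[of _ "h x - x * (h c / c)"])
          (auto simp: zero_le_mult_iff)
    qed
  next
    case False
    show ?thesis
      unfolding \<phi>_def[symmetric]
    proof (rule DERIV_nonpos_imp_nonincreasing[of t c])
      show "t \<le> c" using False by simp
      fix x assume "t \<le> x" "x \<le> c"
      then show "\<exists>y. (\<phi> has_real_derivative y) (at x) \<and> y \<le> 0"
        using D\<phi>[of x] sign[of x] c t by (intro exI[of _ "h x - x * (h c / c)"])
          (auto simp: zero_le_mult_iff)
    qed
  qed
qed

context
  fixes G G' G'' :: "real \<Rightarrow> real" and r :: real
  assumes G': "\<And>x. x \<in> {-r<..<r} \<Longrightarrow> (G has_real_derivative G' x) (at x)"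
    and G'': "\<And>x. x \<in> {-r<..<r} \<Longrightarrow> (G' has_real_derivative G'' x) (at x)"
begin

lemma even_part_has_real_derivative:
  assumes "x \<in> {-r<..<r}"
  shows "((\<lambda>t. G t + G (-t)) has_real_derivative G' x - G' (-x)) (at x)"
proof -
  have "((\<lambda>t. G (-t)) has_real_derivative - G' (-x)) (at x)"
    using DERIV_mirror G' assms by force
  then show ?thesis
    using G'[OF assms] by (auto intro!: derivative_eq_intros)
qed

lemma odd_part_has_real_derivative:
  assumes "x \<in> {-r<..<r}"
  shows "((\<lambda>t. G' t - G' (-t)) has_real_derivative G'' x + G'' (-x)) (at x)"
proof -
  have "((\<lambda>t. G' (-t)) has_real_derivative - G'' (-x)) (at x)"
    using DERIV_mirror G'' assms by force
  then show ?thesis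
    using G''[OF assms] by (auto intro!: derivative_eq_intros)
qed

lemma even_part_mono:
  assumes G''_nonneg: "\<And>x. x \<in> {-r<..<r} \<Longrightarrow> 0 \<le> G'' x"
    and "0 \<le> s" "s \<le> t" "t < r"
  shows "G s + G (-s) \<le> G t + G (-t)"
proof (rule DERIV_nonneg_imp_nondecreasing[OF \<open>s \<le> t\<close>])
  fix x assume x: "s \<le> x" "x \<le> t"
  have "G' 0 - G' (-0) \<le> G' x - G' (-x)"
  proof (rule DERIV_nonneg_imp_nondecreasing[where f = "\<lambda>t. G' t - G' (-t)"])
    fix y assume "0 \<le> y" "y \<le> x"
    then show "\<exists>k. ((\<lambda>t. G' t - G' (-t)) has_real_derivative k) (at y) \<and> 0 \<le> k"
      using odd_part_has_real_derivative[of y] G''_nonneg[of y] G''_nonneg[of "-y"] x assms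
      by (intro exI[of _ "G'' y + G'' (-y)"]) auto
  qed (use x assms in simp)
  then show "\<exists>k. ((\<lambda>t. G t + G (-t)) has_real_derivative k) (at x) \<and> 0 \<le> k"
    using even_part_has_real_derivative[of x] x assms by (intro exI[of _ "G' x - G' (-x)"]) auto
qed

lemma even_part_quadratic_minorant:
  assumes G''_convex: "convex_on {-r<..<r} G''"
    and c: "0 < c" "c < r" and t: "\<bar>t\<bar> < r"
  defines "L \<equiv> (G' c - G' (-c)) / (2 * c)"
  shows "G c + G (-c) - L * c\<^sup>2 \<le> G t + G (-t) - L * t\<^sup>2"
proof -
  have "(G' s - G' (-s)) / s \<le> (G' u - G' (-u)) / u" if "0 < s" "s \<le> u" "u < r" for s u
    using odd_part_has_real_derivative convex_on_symmetric_sum_mono[OF G''_convex] that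
    by (intro slope_from_origin_mono[where F' = "\<lambda>x. G'' x + G'' (-x)" and b = r]) auto
  then have "G c + G (-c) - L * c\<^sup>2 \<le> G \<bar>t\<bar> + G (- \<bar>t\<bar>) - L * \<bar>t\<bar>\<^sup>2"
    unfolding L_def using even_part_has_real_derivative c t
    by (intro quadratic_minorant_of_slope_mono[where h = "\<lambda>x. G' x - G' (-x)" and b = r]) auto
  then show ?thesis
    by (cases "0 \<le> t") auto
qed

end

lemma even_part_quadratic_minorant_endpoints:
  fixes g :: "real \<Rightarrow> ereal" and G :: "real \<Rightarrow> real"
  assumes g_G: "\<And>t. t \<in> {-1..<1} \<Longrightarrow> g t = ereal (G t)"
    and G_cont: "continuous_on {-1..<1} G"
    and g_at1: "(g \<longlongrightarrow> g 1) (at_left 1)"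
    and minorant: "\<And>t. t \<in> {-1<..<1} \<Longrightarrow> A + B * t\<^sup>2 \<le> G t + G (-t)"
    and t: "\<bar>t\<bar> \<le> 1"
  shows "ereal (A + B * t\<^sup>2) \<le> g t + g (-t)"
proof -
  have near_1: "\<forall>\<^sub>F t in at_left 1. t \<in> {0<..<1::real}"
    by (rule eventually_at_left_real) simp
  have G_at_minus1: "((\<lambda>t. G (-t)) \<longlongrightarrow> G (-1)) (at_left 1)"
  proof (rule filterlim_compose[of G])
    show "(G \<longlongrightarrow> G (-1)) (at (-1) within {-1..<1})"
      using G_cont by (simp add: continuous_on_def)
    show "filterlim uminus (at (-1) within {-1..<1}) (at_left (1::real))"
      unfolding filterlim_at
      using near_1 by (auto intro!: tendsto_intros elim: eventually_mono)
  qed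
  have "ereal (A + B - G (-1)) \<le> g 1"
  proof (rule tendsto_le[OF trivial_limit_at_left_real g_at1])
    show "((\<lambda>t. ereal (A + B * t\<^sup>2 - G (-t))) \<longlongrightarrow> ereal (A + B - G (-1))) (at_left 1)"
      using G_at_minus1 by (auto intro!: tendsto_intros tendsto_eq_intros)
    show "\<forall>\<^sub>F t in at_left 1. ereal (A + B * t\<^sup>2 - G (-t)) \<le> g t"
      using near_1
    proof eventually_elim
      case (elim t)
      then show ?case using minorant[of t] g_G[of t] by auto
    qed
  qed
  then have at1: "ereal (A + B) \<le> g 1 + g (-1)"
    using g_G[of "-1"] by (cases "g 1") auto
  consider "t = 1" | "t = -1" | "t \<in> {-1<..<1}"
    using t by force
  then show ?thesis
  proof cases
    case 3
    then show ?thesis using minorant g_G by auto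
  qed (use at1 in \<open>auto simp: add.commute\<close>)
qed

section \<open>Polarization of antipodal configurations and of the cross-polytope\<close>

lemma sum_inner_orthonormal_squared:
  fixes a :: "'n \<Rightarrow> real^'n"
  assumes "\<forall>i j. a i \<bullet> a j = (if i = j then 1 else 0)"
  shows "(\<Sum>i\<in>UNIV. (x \<bullet> a i)\<^sup>2) = (norm x)\<^sup>2"
proof -
  define A :: "real^'n^'n" where "A = (\<chi> i. a i)"
  have "orthogonal_matrix A"
    unfolding orthogonal_matrix_orthonormal_rows A_def row_def orthogonal_def
    using assms by (simp add: norm_eq_1)
  then have "orthogonal_transformation (\<lambda>x. A *v x)"
    by (simp add: orthogonal_transformation_matrix)
  then have "norm (A *v x) = norm x"
    by (rule orthogonal_transformation_norm)
  moreover have "(\<Sum>i\<in>UNIV. ((A *v x) $ i)\<^sup>2) = (norm (A *v x))\<^sup>2"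
    unfolding power2_norm_eq_inner inner_vec_def by (simp add: power2_eq_square)
  ultimately have "(\<Sum>i\<in>UNIV. ((A *v x) $ i)\<^sup>2) = (norm x)\<^sup>2"
    by simp
  then show ?thesis
    by (simp add: matrix_vector_mul_component A_def inner_commute)
qed

lemma sum_mset_ereal: "(\<Sum>x\<in>#M. ereal (f x)) = ereal (\<Sum>x\<in>#M. f x)"
  by (induction M) auto

lemma polarization_le_sum:
  assumes "norm x = 1"
  shows "polarization g \<omega> \<le> (\<Sum>y\<in>#\<omega>. g (x \<bullet> y))"
  unfolding polarization_def using assms by (intro INF_lower) simp

definition cross_polytope :: "('i::finite \<Rightarrow> 'a::real_normed_vector) \<Rightarrow> 'a multiset" where
  "cross_polytope a = image_mset a (mset_set UNIV) + image_mset (\<lambda>i. - a i) (mset_set UNIV)"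

lemma sum_mset_cross_polytope: "(\<Sum>y\<in>#cross_polytope a. f y) = (\<Sum>i\<in>UNIV. f (a i) + f (- a i))"
  by (simp add: cross_polytope_def sum_unfold_sum_mset[symmetric] sum.distrib multiset.map_comp o_def)

lemma polarization_cross_polytope:
  fixes g :: "real \<Rightarrow> ereal" and a :: "'n \<Rightarrow> real^'n" and A B c :: real
  assumes orthonormal: "\<forall>i j. a i \<bullet> a j = (if i = j then 1 else 0)"
    and minorant: "\<And>t. \<bar>t\<bar> \<le> 1 \<Longrightarrow> ereal (A + B * t\<^sup>2) \<le> g t + g (-t)"
    and tight: "g c + g (-c) = ereal (A + B * c\<^sup>2)"
    and c: "c = 1 / sqrt CARD('n)"
  shows "polarization g (cross_polytope a) = ereal CARD('n) * (g c + g (-c))"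
proof (rule antisym)
  have card_c: "real CARD('n) * c\<^sup>2 = 1"
    by (simp add: c power_divide)
  define x0 where "x0 = c *\<^sub>R (\<Sum>i\<in>UNIV. a i)"
  have x0_a: "x0 \<bullet> a j = c" for j
    by (simp add: x0_def inner_sum_left orthonormal[rule_format])
  have "(norm x0)\<^sup>2 = 1"
    using sum_inner_orthonormal_squared[OF orthonormal, of x0] card_c by (simp add: x0_a)
  then have "norm x0 = 1"
    using norm_ge_zero[of x0] by (auto simp: power2_eq_1_iff)
  then have "polarization g (cross_polytope a) \<le> (\<Sum>i\<in>(UNIV :: 'n set). g c + g (-c))"
    using polarization_le_sum[of x0 g "cross_polytope a"]
    by (simp add: sum_mset_cross_polytope inner_minus_right x0_a)
  then show "polarization g (cross_polytope a) \<le> ereal CARD('n) * (g c + g (-c))"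
    by (simp add: tight)
  show "ereal CARD('n) * (g c + g (-c)) \<le> polarization g (cross_polytope a)"
    unfolding polarization_def tight
  proof (rule INF_greatest)
    fix x :: "real^'n" assume "x \<in> sphere 0 1"
    then have "(\<Sum>i\<in>UNIV. (x \<bullet> a i)\<^sup>2) = 1"
      using sum_inner_orthonormal_squared[OF orthonormal] by simp
    then have "CARD('n) * (A + B * c\<^sup>2) = (\<Sum>i\<in>UNIV. A + B * (x \<bullet> a i)\<^sup>2)"
      using card_c by (simp add: sum.distrib sum_distrib_left[symmetric] algebra_simps)
    moreover have "\<bar>x \<bullet> a i\<bar> \<le> 1" for i
      using Cauchy_Schwarz_ineq2[of x "a i"] orthonormal \<open>x \<in> sphere 0 1\<close>
      by (simp add: norm_eq_sqrt_inner)
    ultimately have "ereal (CARD('n) * (A + B * c\<^sup>2))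
        \<le> (\<Sum>i\<in>UNIV. g (x \<bullet> a i) + g (- (x \<bullet> a i)))"
      by (auto simp flip: sum_ereal intro!: sum_mono minorant)
    then show "ereal CARD('n) * ereal (A + B * c\<^sup>2) \<le> (\<Sum>y\<in>#cross_polytope a. g (x \<bullet> y))"
      by (simp add: sum_mset_cross_polytope inner_minus_right)
  qed
qed

lemma polarization_antipodal_le:
  fixes g :: "real \<Rightarrow> ereal" and \<omega> :: "(real^'n) multiset" and c :: real
  assumes unit: "\<forall>y\<in>#\<omega>. norm y = 1" and size: "size \<omega> = 2 * CARD('n)"
    and antipodal: "antipodal \<omega>"
    and c: "c = 1 / sqrt CARD('n)"
    and finite: "\<And>t. \<bar>t\<bar> \<le> c \<Longrightarrow> \<bar>g t\<bar> \<noteq> \<infinity>"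
    and bound: "\<And>t. \<bar>t\<bar> \<le> c \<Longrightarrow> g t + g (-t) \<le> g c + g (-c)"
  shows "polarization g \<omega> \<le> ereal CARD('n) * (g c + g (-c))"
proof -
  obtain x where x: "norm x = 1" "\<forall>y\<in>#\<omega>. \<bar>x \<bullet> y\<bar> \<le> c"
    using antipodal_exists_unit_vector_small_inner[of \<omega>] unit size antipodal c by auto
  define G where "G t = real_of_ereal (g t)" for t
  have g_G: "g t = ereal (G t)" if "\<bar>t\<bar> \<le> c" for t
    using finite[OF that] by (simp add: G_def ereal_real')
  have G_bound: "G t + G (-t) \<le> G c + G (-c)" if "\<bar>t\<bar> \<le> c" for t
    using bound[OF that] g_G[of t] g_G[of "-t"] g_G[of c] g_G[of "-c"] that c by simp
  have "(\<Sum>y\<in>#\<omega>. G (x \<bullet> y)) = (\<Sum>y\<in>#image_mset uminus \<omega>. G (x \<bullet> y))"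
    using antipodal by (simp add: antipodal_def)
  then have "2 * (\<Sum>y\<in>#\<omega>. G (x \<bullet> y)) = (\<Sum>y\<in>#\<omega>. G (x \<bullet> y) + G (- (x \<bullet> y)))"
    by (simp add: sum_mset.distrib multiset.map_comp o_def inner_minus_right)
  also have "\<dots> \<le> (\<Sum>y\<in>#\<omega>. G c + G (-c))"
    using x(2) by (intro sum_mset_mono G_bound) auto
  also have "\<dots> = 2 * (CARD('n) * (G c + G (-c)))"
    using size by simp
  finally have real_bound: "(\<Sum>y\<in>#\<omega>. G (x \<bullet> y)) \<le> CARD('n) * (G c + G (-c))"
    by simp
  have "polarization g \<omega> \<le> (\<Sum>y\<in>#\<omega>. g (x \<bullet> y))"
    using x(1) by (rule polarization_le_sum)
  also have "\<dots> = ereal (\<Sum>y\<in>#\<omega>. G (x \<bullet> y))"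
    using x(2) g_G by (simp add: sum_mset_ereal[symmetric] cong: image_mset_cong)
  also have "\<dots> \<le> ereal (CARD('n) * (G c + G (-c)))"
    using real_bound by simp
  also have "\<dots> = ereal CARD('n) * (g c + g (-c))"
    using g_G[of c] g_G[of "-c"] c by simp
  finally show ?thesis .
qed

theorem corollary3p3:
  fixes g :: "real \<Rightarrow> ereal"
    and \<omega> :: "(real^'n) multiset"
    and a :: "'n \<Rightarrow> real^'n"
  assumes dim: "CARD('n) \<ge> 2"
    and g_finite: "\<forall>t\<in>{-1..<1}. \<bar>g t\<bar> \<noteq> \<infinity>"
    and g_cont: "continuous_on {-1..<1} (\<lambda>t. real_of_ereal (g t))"
    and g_at1: "(g \<longlongrightarrow> g 1) (at_left 1)"
    and g_diff: "\<forall>t\<in>{-1<..<1}. (\<lambda>s. real_of_ereal (g s)) differentiable (at t)"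
    and g2_ex: "\<forall>t\<in>{-1<..<1}. deriv (\<lambda>s. real_of_ereal (g s)) differentiable (at t)"
    and g2_nonneg: "\<forall>t\<in>{-1<..<1}. deriv (deriv (\<lambda>s. real_of_ereal (g s))) t \<ge> 0"
    and g2_convex: "convex_on {-1<..<1} (deriv (deriv (\<lambda>s. real_of_ereal (g s))))"
    and \<omega>_sphere: "\<forall>x\<in>#\<omega>. norm x = 1"
    and \<omega>_size: "size \<omega> = 2 * CARD('n)"
    and \<omega>_antipodal: "antipodal \<omega>"
    and a_orthonormal: "\<forall>i j. a i \<bullet> a j = (if i = j then 1 else 0)"
  shows "polarization g \<omega>
           \<le> polarization g (image_mset a (mset_set UNIV) + image_mset (\<lambda>i. - a i) (mset_set UNIV))
       \<and> polarization g (image_mset a (mset_set UNIV) + image_mset (\<lambda>i. - a i) (mset_set UNIV))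
           = ereal (real CARD('n)) * (g (1 / sqrt (real CARD('n))) + g (- 1 / sqrt (real CARD('n))))"
proof -
  define c where "c = 1 / sqrt (real CARD('n))"
  define G where "G = (\<lambda>s. real_of_ereal (g s))"
  define L where "L = (deriv G c - deriv G (-c)) / (2 * c)"
  have c: "0 < c" "c < 1"
    using dim by (auto simp: c_def real_less_rsqrt)
  have g_G: "g t = ereal (G t)" if "t \<in> {-1..<1}" for t
    using g_finite that by (simp add: G_def ereal_real')
  have G': "(G has_real_derivative deriv G x) (at x)" if "x \<in> {-1<..<1}" for x
    using g_diff that by (simp add: G_def DERIV_deriv_iff_real_differentiable)
  have G'': "(deriv G has_real_derivative deriv (deriv G) x) (at x)" if "x \<in> {-1<..<1}" for x
    using g2_ex that by (simp add: G_def DERIV_deriv_iff_real_differentiable)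
  have G_mono: "G s + G (-s) \<le> G t + G (-t)" if "0 \<le> s" "s \<le> t" "t < 1" for s t
    using g2_nonneg[folded G_def] that by (intro even_part_mono[OF G' G'']) auto
  have "g t + g (-t) \<le> g c + g (-c)" if "\<bar>t\<bar> \<le> c" for t
    using G_mono[of "\<bar>t\<bar>" c] g_G that c by (cases "0 \<le> t") (auto simp: add.commute)
  then have antipodal_bound: "polarization g \<omega> \<le> ereal CARD('n) * (g c + g (-c))"
    using g_G c by (intro polarization_antipodal_le[OF \<omega>_sphere \<omega>_size \<omega>_antipodal c_def])
      (auto simp: abs_le_iff)
  have "G c + G (-c) - L * c\<^sup>2 + L * t\<^sup>2 \<le> G t + G (-t)" if "t \<in> {-1<..<1}" for t
    using even_part_quadratic_minorant[OF G' G'' g2_convex[folded G_def] c, of t] that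
    by (simp add: L_def abs_less_iff)
  then have "ereal (G c + G (-c) - L * c\<^sup>2 + L * t\<^sup>2) \<le> g t + g (-t)" if "\<bar>t\<bar> \<le> 1" for t
    using that by (intro even_part_quadratic_minorant_endpoints[OF g_G g_cont[folded G_def] g_at1])
  then have "polarization g (cross_polytope a) = ereal CARD('n) * (g c + g (-c))"
    using g_G c by (intro polarization_cross_polytope[OF a_orthonormal _ _ c_def]) auto
  moreover have "- 1 / sqrt (real CARD('n)) = - c"
    by (simp add: c_def)
  ultimately show ?thesis
    using antipodal_bound unfolding cross_polytope_def c_def[symmetric] by simp
qed

end
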